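(* Let $A$ be a finite set of options with at least two elements, $v$ a Llull matrix on $A$, $v^*$ its path scores and $T$ its set of path-top choices (as defined in the context). An option $x\in A$ satisfies $T=\{x\}$ if and only if $v^*_{xy}>v^*_{yx}$ for all $y\in A\setminus\{x\}$.
   Context: A Llull matrix on a finite set $A$ is a family of real numbers $v_{xy}\in[0,1]$, indexed by ordered pairs $(x,y)$ of distinct elements of $A$, with $v_{xy}+v_{yx}\le 1$. The path scores are $v^*_{xy}=\max \min(v_{x_0x_1},\dots,v_{x_{m-1}x_m})$, the maximum over all paths $x_0x_1\dots x_m$ with $m\ge1$, $x_0=x$, $x_m=y$, the $x_i$ pairwise distinct. The ranking relation $\succeq$ is defined by: $x\succeq y$ iff there is a path $x_0\dots x_m$ from $x$ to $y$ with $v^*_{x_ix_{i+1}}\ge v^*_{x_{i+1}x_i}$ for all $i<m$. An option $x$ is a path-top choice if $x\succeq y$ for every $y\ne x$; $T$ is the set of path-top choices. *)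

theory Defs
  imports Main Complex_Main
begin

text \<open>A Llull matrix on the finite set A: v x y \<in> [0,1] for distinct x, y \<in> A,
  with v x y + v y x \<le> 1.  Values of v outside distinct pairs of A are irrelevant.\<close>
definition llull_matrix :: "'a set \<Rightarrow> ('a \<Rightarrow> 'a \<Rightarrow> real) \<Rightarrow> bool" where
  "llull_matrix A v \<longleftrightarrow>
     (\<forall>x\<in>A. \<forall>y\<in>A. x \<noteq> y \<longrightarrow> 0 \<le> v x y \<and> v x y \<le> 1 \<and> v x y + v y x \<le> 1)"

definition is_path :: "'a set \<Rightarrow> 'a \<Rightarrow> 'a \<Rightarrow> 'a list \<Rightarrow> bool" where
  "is_path A x y p \<longleftrightarrow> 2 \<le> length p \<and> distinct p \<and> set p \<subseteq> A \<and> hd p = x \<and> last p = y"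

definition edges :: "'a list \<Rightarrow> ('a \<times> 'a) list" where
  "edges p = zip p (tl p)"

definition path_strength :: "('a \<Rightarrow> 'a \<Rightarrow> real) \<Rightarrow> 'a list \<Rightarrow> real" where
  "path_strength v p = Min (set (map (\<lambda>(a, b). v a b) (edges p)))"

text \<open>Path scores v*_{xy} (meaningful for distinct x, y in A).\<close>
definition path_score :: "'a set \<Rightarrow> ('a \<Rightarrow> 'a \<Rightarrow> real) \<Rightarrow> 'a \<Rightarrow> 'a \<Rightarrow> real" where
  "path_score A v x y = Max {path_strength v p | p. is_path A x y p}"

definition ranks :: "'a set \<Rightarrow> ('a \<Rightarrow> 'a \<Rightarrow> real) \<Rightarrow> 'a \<Rightarrow> 'a \<Rightarrow> bool" where
  "ranks A v x y \<longleftrightarrow> (\<exists>p. is_path A x y p \<and>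
      (\<forall>(a, b)\<in>set (edges p). path_score A v a b \<ge> path_score A v b a))"

definition path_top :: "'a set \<Rightarrow> ('a \<Rightarrow> 'a \<Rightarrow> real) \<Rightarrow> 'a set" where
  "path_top A v = {x\<in>A. \<forall>y\<in>A. y \<noteq> x \<longrightarrow> ranks A v x y}"

end

theory Submission
  imports Defs
begin

text \<open>Only the combinatorics of the ranking relation matters. If some y \<noteq> x had v*_{yx} \<ge> v*_{xy}, then prefixing y to the paths witnessing
  x \<succeq> z (or cutting them at y) would make y a path-top choice as well. Conversely, strict
  dominance makes x a path-top choice via the direct edges, and no z \<noteq> x can reach x,
  because the last step w x of such a path would need v*_{wx} \<ge> v*_{xw}.\<close>

lemma edges_Cons_Cons [simp]: "edges (a # b # l) = (a, b) # edges (b # l)"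
  by (simp add: edges_def)

lemma set_edges_append_subset: "set (edges zs) \<subseteq> set (edges (ys @ zs))"
proof (induction ys)
  case Nil
  then show ?case by simp
next
  case (Cons a ys)
  then show ?case
    by (cases "ys @ zs") (auto simp: edges_def)
qed

lemma is_path_two: "a \<in> A \<Longrightarrow> b \<in> A \<Longrightarrow> a \<noteq> b \<Longrightarrow> is_path A a b [a, b]"
  by (simp add: is_path_def)

lemma is_path_suffix:
  assumes "is_path A x z p" "y \<in> set p" "y \<noteq> z"
  obtains q where "is_path A y z q" "set (edges q) \<subseteq> set (edges p)"
proof -
  obtain p1 p2 where p: "p = p1 @ y # p2"
    using assms(2) split_list by metis
  with assms have "p2 \<noteq> []"
    unfolding is_path_def by auto
  with assms(1) have "is_path A y z (y # p2)"
    unfolding is_path_def p by (auto simp: Suc_le_eq)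
  moreover have "set (edges (y # p2)) \<subseteq> set (edges p)"
    using p set_edges_append_subset by metis
  ultimately show ?thesis using that by blast
qed

lemma is_path_Cons:
  assumes "is_path A x z p" "y \<notin> set p" "y \<in> A"
  shows "is_path A y z (y # p)" "set (edges (y # p)) = insert (y, x) (set (edges p))"
proof -
  obtain l where "p = x # l"
    using assms(1) unfolding is_path_def by (cases p) auto
  then show "is_path A y z (y # p)" "set (edges (y # p)) = insert (y, x) (set (edges p))"
    using assms unfolding is_path_def by auto
qed

lemma is_path_last_edge:
  assumes "is_path A z x p"
  obtains w where "w \<in> A - {x}" "(w, x) \<in> set (edges p)"
proof -
  have p: "length p \<ge> 2" "distinct p" "last p = x" "set p \<subseteq> A"
    using assms unfolding is_path_def by auto
  obtain q where q: "p = q @ [x]"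
    using p by (metis append_butlast_last_id list.size(3) not_numeral_le_zero)
  with p(1) have "q \<noteq> []" by auto
  then obtain l w where "q = l @ [w]" by (metis rev_exhaust)
  with q have pl: "p = l @ [w, x]" by simp
  have "(w, x) \<in> set (edges p)"
    using set_edges_append_subset[of "[w, x]" l] pl by (simp add: edges_def)
  moreover have "w \<in> A - {x}"
    using p pl by auto
  ultimately show ?thesis using that by blast
qed

lemma ranks_direct:
  assumes "x \<in> A" "y \<in> A" "x \<noteq> y" "path_score A v x y \<ge> path_score A v y x"
  shows "ranks A v x y"
  using assms is_path_two[of x A y] unfolding ranks_def
  by (intro exI[of _ "[x, y]"]) (simp add: edges_def)

lemma ranks_Cons:
  assumes "ranks A v x z" "y \<in> A" "y \<noteq> z" "path_score A v y x \<ge> path_score A v x y"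
  shows "ranks A v y z"
proof -
  obtain p where p: "is_path A x z p"
    and good: "\<forall>(a, b)\<in>set (edges p). path_score A v a b \<ge> path_score A v b a"
    using assms(1) unfolding ranks_def by blast
  show ?thesis
  proof (cases "y \<in> set p")
    case True
    then obtain q where "is_path A y z q" "set (edges q) \<subseteq> set (edges p)"
      using is_path_suffix[OF p _ assms(3)] by blast
    then show ?thesis using good unfolding ranks_def by blast
  next
    case False
    then show ?thesis
      using is_path_Cons[OF p False assms(2)] good assms(4) unfolding ranks_def
      by (intro exI[of _ "y # p"]) auto
  qed
qed

lemma ranks_imp_last_step:
  assumes "ranks A v z x"
  obtains w where "w \<in> A - {x}" "path_score A v w x \<ge> path_score A v x w"
proof -
  obtain p where p: "is_path A z x p"
    and good: "\<forall>(a, b)\<in>set (edges p). path_score A v a b \<ge> path_score A v b a"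
    using assms unfolding ranks_def by blast
  obtain w where "w \<in> A - {x}" "(w, x) \<in> set (edges p)"
    using is_path_last_edge[OF p] .
  then show ?thesis using good that by auto
qed

lemma path_top_transfer:
  assumes "x \<in> path_top A v" "y \<in> A" "path_score A v y x \<ge> path_score A v x y"
  shows "y \<in> path_top A v"
  unfolding path_top_def
proof (intro CollectI conjI ballI impI)
  fix z assume z: "z \<in> A" "z \<noteq> y"
  show "ranks A v y z"
  proof (cases "z = x")
    case True
    have "x \<in> A" using assms(1) unfolding path_top_def by simp
    with True show ?thesis using assms(2,3) z(2) by (intro ranks_direct) auto
  next
    case False
    then have "ranks A v x z" using assms(1) z unfolding path_top_def by simp
    then show ?thesis using assms(2) z(2)[symmetric] assms(3) by (rule ranks_Cons)
  qed
qed (fact assms(2))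

theorem corollary2p3:
  fixes A :: "'a set" and v :: "'a \<Rightarrow> 'a \<Rightarrow> real" and x :: 'a
  assumes "finite A" and "card A \<ge> 2" and "llull_matrix A v" and "x \<in> A"
  shows "path_top A v = {x} \<longleftrightarrow>
         (\<forall>y\<in>A - {x}. path_score A v x y > path_score A v y x)"
proof
  assume T: "path_top A v = {x}"
  show "\<forall>y\<in>A - {x}. path_score A v x y > path_score A v y x"
  proof (rule ballI, rule ccontr)
    fix y assume "y \<in> A - {x}" "\<not> path_score A v x y > path_score A v y x"
    then have "y \<in> path_top A v" using path_top_transfer[of x A v y] T by auto
    then show False using T \<open>y \<in> A - {x}\<close> by blast
  qed
next
  assume dom: "\<forall>y\<in>A - {x}. path_score A v x y > path_score A v y x"
  have "x \<in> path_top A v"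
    unfolding path_top_def using assms(4) dom by (auto intro!: ranks_direct less_imp_le)
  moreover have "z = x" if "z \<in> path_top A v" for z
  proof (rule ccontr)
    assume "z \<noteq> x"
    then have "ranks A v z x" using that assms(4) unfolding path_top_def by auto
    then obtain w where "w \<in> A - {x}" "path_score A v w x \<ge> path_score A v x w"
      by (rule ranks_imp_last_step)
    with dom show False by (meson leD)
  qed
  ultimately show "path_top A v = {x}" by blast
qed

end
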